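(* Let $A$ be a cyclic Leibniz algebra generated by $a$, with notation as in the context. Then $A$ has a unique maximal ideal, namely $M_1=\{b\in A: t(L_a)(b)=0\}$, where $t(x)=p(x)/p_1(x)$.
   Context: A (left) Leibniz algebra is an algebra satisfying $x(yz)=(xy)z+y(xz)$ for all $x,y,z$; all algebras are finite-dimensional over a field $F$. $A$ is a cyclic Leibniz algebra generated by $a$: $A$ is generated as an algebra by the single element $a$, and with $a^1=a$, $a^{k+1}=aa^k$, the elements $a,a^2,\dots,a^n$ form a basis of $A$. Write $aa^n=\alpha_2a^2+\cdots+\alpha_na^n$. $L_a:A\to A$ is $b\mapsto ab$, with characteristic (and minimal) polynomial $p(x)=x^n-\alpha_nx^{n-1}-\cdots-\alpha_2x=p_1(x)^{n_1}\cdots p_s(x)^{n_s}$, the $p_j$ distinct monic irreducibles over $F$, $p_1(x)=x$. An ideal is a subspace $I$ with $AI\subseteq I$ and $IA\subseteq I$; a maximal ideal is a proper ideal not properly contained in any proper ideal. *)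

theory Defs
  imports Main "HOL-Computational_Algebra.Polynomial"
begin

definition leibniz_algebra ::
  "('a::field \<Rightarrow> 'v::ab_group_add \<Rightarrow> 'v) \<Rightarrow> ('v \<Rightarrow> 'v \<Rightarrow> 'v) \<Rightarrow> bool" where
  "leibniz_algebra scale m \<longleftrightarrow>
     vector_space scale \<and>
     (\<forall>x. Vector_Spaces.linear scale scale (m x)) \<and>
     (\<forall>y. Vector_Spaces.linear scale scale (\<lambda>x. m x y)) \<and>
     (\<forall>x y z. m x (m y z) = m (m x y) z + m y (m x z))"

text \<open>Left powers: lpow m a 1 = a, lpow m a (k+1) = m a (lpow m a k).\<close>
definition lpow :: "('v \<Rightarrow> 'v \<Rightarrow> 'v) \<Rightarrow> 'v \<Rightarrow> nat \<Rightarrow> 'v" where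
  "lpow m a k = (m a ^^ (k - 1)) a"

definition generated_by ::
  "('a::field \<Rightarrow> 'v::ab_group_add \<Rightarrow> 'v) \<Rightarrow> ('v \<Rightarrow> 'v \<Rightarrow> 'v) \<Rightarrow> 'v \<Rightarrow> bool" where
  "generated_by scale m a \<longleftrightarrow>
     (\<forall>S. module.subspace scale S \<and> (\<forall>x\<in>S. \<forall>y\<in>S. m x y \<in> S) \<and> a \<in> S \<longrightarrow> S = UNIV)"

definition alg_ideal ::
  "('a::field \<Rightarrow> 'v::ab_group_add \<Rightarrow> 'v) \<Rightarrow> ('v \<Rightarrow> 'v \<Rightarrow> 'v) \<Rightarrow> 'v set \<Rightarrow> bool" where
  "alg_ideal scale m I \<longleftrightarrow>
     module.subspace scale I \<and> (\<forall>x. \<forall>y\<in>I. m x y \<in> I \<and> m y x \<in> I)"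

definition maximal_ideal ::
  "('a::field \<Rightarrow> 'v::ab_group_add \<Rightarrow> 'v) \<Rightarrow> ('v \<Rightarrow> 'v \<Rightarrow> 'v) \<Rightarrow> 'v set \<Rightarrow> bool" where
  "maximal_ideal scale m I \<longleftrightarrow>
     alg_ideal scale m I \<and> I \<noteq> UNIV \<and>
     (\<forall>J. alg_ideal scale m J \<and> I \<subseteq> J \<and> J \<noteq> UNIV \<longrightarrow> J = I)"

definition poly_op ::
  "('a::field \<Rightarrow> 'v::ab_group_add \<Rightarrow> 'v) \<Rightarrow> 'a poly \<Rightarrow> ('v \<Rightarrow> 'v) \<Rightarrow> 'v \<Rightarrow> 'v" where
  "poly_op scale q f b = (\<Sum>i\<le>degree q. scale (coeff q i) ((f ^^ i) b))"

definition char_poly_cyc :: "nat \<Rightarrow> (nat \<Rightarrow> 'a::field) \<Rightarrow> 'a poly" where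
  "char_poly_cyc n \<alpha> = monom 1 n - (\<Sum>k=2..n. monom (\<alpha> k) (k - 1))"

end

theory Submission
  imports Defs
begin

text \<open>By the Leibniz identity \<open>a\<^sup>k z = 0\<close> for all \<open>k \<ge> 2\<close>, hence every
  element has the form \<open>c a + a w\<close> and acts by \<open>(c a + a w) y = c (a y)\<close>.  So all products
  lie in \<open>W = L\<^sub>a(A)\<close>, which is therefore an ideal, and any ideal not contained in \<open>W\<close>
  contains \<open>W\<close> and \<open>a\<close>, i.e. is all of \<open>A\<close>.  When \<open>a \<notin> W\<close> this makes \<open>W\<close> the unique
  maximal ideal.

  The defining relation says \<open>p(L\<^sub>a) a = 0\<close>; as \<open>p(L\<^sub>a)\<close> commutes
  with \<open>L\<^sub>a\<close>, \<open>p(L\<^sub>a) = 0\<close>, so \<open>t(L\<^sub>a)\<close> vanishes on \<open>W\<close> because \<open>p = t x\<close>.  On the other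
  hand \<open>t(L\<^sub>a) a = a\<^sup>n - \<Sum> \<alpha>\<^sub>k a\<^sup>k\<^sup>-\<^sup>1 \<noteq> 0\<close> by linear independence.  Hence
  \<open>ker t(L\<^sub>a) = W\<close> and \<open>a \<notin> W\<close>, and the theorem follows.\<close>

context vector_space
begin

lemma poly_op_bound:
  assumes "degree q \<le> N"
  shows "poly_op scale q f b = (\<Sum>i\<le>N. scale (coeff q i) ((f ^^ i) b))"
  unfolding poly_op_def
  by (rule sum.mono_neutral_left) (use assms in \<open>auto simp: coeff_eq_0\<close>)

lemma poly_op_add: "poly_op scale (p + q) f b = poly_op scale p f b + poly_op scale q f b"
proof -
  let ?N = "max (degree p) (degree q)"
  have "degree (p + q) \<le> ?N" by (rule degree_add_le) auto
  then show ?thesis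
    using poly_op_bound[of p ?N] poly_op_bound[of q ?N] poly_op_bound[of "p + q" ?N]
    by (simp add: scale_left_distrib sum.distrib)
qed

lemma poly_op_diff: "poly_op scale (p - q) f b = poly_op scale p f b - poly_op scale q f b"
proof -
  let ?N = "max (degree p) (degree q)"
  have "degree (p - q) \<le> ?N" by (rule degree_diff_le) auto
  then show ?thesis
    using poly_op_bound[of p ?N] poly_op_bound[of q ?N] poly_op_bound[of "p - q" ?N]
    by (simp add: scale_left_diff_distrib sum_subtractf)
qed

lemma poly_op_zero [simp]: "poly_op scale 0 f b = 0"
  by (simp add: poly_op_def)

lemma poly_op_sum: "poly_op scale (\<Sum>k\<in>S. g k) f b = (\<Sum>k\<in>S. poly_op scale (g k) f b)"
  by (induction S rule: infinite_finite_induct) (simp_all add: poly_op_add)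

lemma poly_op_monom: "poly_op scale (monom c k) f b = scale c ((f ^^ k) b)"
proof -
  have "poly_op scale (monom c k) f b = (\<Sum>i\<le>k. scale (coeff (monom c k) i) ((f ^^ i) b))"
    by (rule poly_op_bound) (simp add: degree_monom_le)
  also have "\<dots> = (\<Sum>i\<le>k. if i = k then scale c ((f ^^ i) b) else 0)"
    by (rule sum.cong) (auto simp: coeff_monom)
  finally show ?thesis by simp
qed

lemma poly_op_mult_X: "poly_op scale (q * [:0, 1:]) f b = poly_op scale q f (f b)"
proof -
  have "q * [:0, 1:] = pCons 0 q" by simp
  moreover have "degree (pCons 0 q) \<le> Suc (degree q)" by (simp add: degree_pCons_le)
  ultimately have "poly_op scale (q * [:0, 1:]) f b
      = (\<Sum>i\<le>Suc (degree q). scale (coeff (pCons 0 q) i) ((f ^^ i) b))"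
    using poly_op_bound by presburger
  also have "\<dots> = (\<Sum>i\<le>degree q. scale (coeff q i) ((f ^^ Suc i) b))"
    unfolding sum.atMost_Suc_shift by simp
  also have "\<dots> = poly_op scale q f (f b)"
    by (simp add: poly_op_def funpow_swap1)
  finally show ?thesis .
qed

lemma funpow_linear:
  "Vector_Spaces.linear scale scale f \<Longrightarrow> Vector_Spaces.linear scale scale (f ^^ j)"
  by (induction j) (simp_all add: linear_id Vector_Spaces.linear_compose)

lemma poly_op_linear:
  assumes "Vector_Spaces.linear scale scale f"
  shows "Vector_Spaces.linear scale scale (poly_op scale q f)"
proof -
  interpret vector_space_pair scale scale ..
  show ?thesis unfolding poly_op_def
    by (intro linear_compose_sum ballI linear_compose_scale_right funpow_linear assms)
qed

lemma poly_op_funpow_commute: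
  assumes "Vector_Spaces.linear scale scale f"
  shows "poly_op scale q f ((f ^^ j) b) = (f ^^ j) (poly_op scale q f b)"
proof -
  interpret vector_space_pair scale scale ..
  have "(f ^^ i) ((f ^^ j) b) = (f ^^ j) ((f ^^ i) b)" for i
    by (metis add.commute comp_apply funpow_add)
  then show ?thesis
    using funpow_linear[OF assms, of j] by (simp add: poly_op_def linear_sum linear_scale)
qed

end

lemma lpow_Suc_funpow: "lpow m a (Suc i) = (m a ^^ i) a"
  by (simp add: lpow_def)

lemma lpow_Suc: "1 \<le> k \<Longrightarrow> lpow m a (Suc k) = m a (lpow m a k)"
  by (cases k) (simp_all add: lpow_def)

lemma char_poly_cyc_factor:
  assumes "1 \<le> n"
  shows "char_poly_cyc n \<alpha> = (monom 1 (n - 1) - (\<Sum>k=2..n. monom (\<alpha> k) (k - 2))) * [:0, 1:]"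
proof -
  have X: "[:0, 1:] = monom (1::'a) 1" by (simp add: monom_Suc)
  have "\<And>k::nat. 2 \<le> k \<Longrightarrow> Suc (k - 2) = k - 1" by arith
  then show ?thesis
    unfolding char_poly_cyc_def X using assms
    by (auto simp: left_diff_distrib sum_distrib_right mult_monom intro!: sum.cong)
qed

lemma char_poly_cyc_div:
  assumes "1 \<le> n"
  shows "char_poly_cyc n \<alpha> div [:0, 1:] = monom 1 (n - 1) - (\<Sum>k=2..n. monom (\<alpha> k) (k - 2))"
  unfolding char_poly_cyc_factor[OF assms]
  by (simp del: mult_pCons_right pCons_0_0)

locale leibniz_alg =
  fixes scale :: "'a::field \<Rightarrow> 'v::ab_group_add \<Rightarrow> 'v"
    and m :: "'v \<Rightarrow> 'v \<Rightarrow> 'v"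
  assumes leibniz: "leibniz_algebra scale m"
begin

sublocale vector_space scale
  using leibniz unfolding leibniz_algebra_def by blast

sublocale vs: vector_space_pair scale scale ..

lemma linear_mult_right: "Vector_Spaces.linear scale scale (m x)"
  using leibniz unfolding leibniz_algebra_def by blast

lemma linear_mult_left: "Vector_Spaces.linear scale scale (\<lambda>x. m x y)"
  using leibniz unfolding leibniz_algebra_def by blast

lemma leibniz_identity: "m x (m y z) = m (m x y) z + m y (m x z)"
  using leibniz unfolding leibniz_algebra_def by blast

lemma m_zero_right [simp]: "m x 0 = 0"
  by (rule vs.linear_0[OF linear_mult_right])

lemma m_add_left: "m (x + x') y = m x y + m x' y"
  using vs.linear_add[OF linear_mult_left] by simp

lemma m_scale_left: "m (scale c x) y = scale c (m x y)"
  using vs.linear_scale[OF linear_mult_left] by simp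

text \<open>In a left Leibniz algebra every left power of degree at least 2 acts as zero from
  the left: \<open>(aa)z = a(az) - a(az) = 0\<close>, and inductively
  \<open>a\<^sup>k\<^sup>+\<^sup>1 z = a(a\<^sup>k z) - a\<^sup>k(az) = 0\<close>.\<close>
lemma power_mult_zero: "m (lpow m a (Suc (Suc k))) z = 0"
proof (induction k arbitrary: z)
  case 0
  show ?case using leibniz_identity[of a a z] by (simp add: lpow_def)
next
  case (Suc k)
  show ?case
    using leibniz_identity[of a "lpow m a (Suc (Suc k))" z] Suc by (simp add: lpow_Suc)
qed

end

text \<open>A Leibniz algebra spanned by the left powers \<open>a, \<dots>, a\<^sup>n\<close> of one element.  This
  spanning property alone determines the ideal structure.\<close>
locale cyclic_leibniz = leibniz_alg +
  fixes a and n :: nat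
  assumes powers_span: "span (lpow m a ` {1..n}) = UNIV"
begin

text \<open>Elements of \<open>L\<^sub>a(A)\<close> act as zero from the left, since they are combinations of
  powers \<open>a\<^sup>k\<close> with \<open>k \<ge> 2\<close>.\<close>
lemma image_mult_zero: "m (m a y) z = 0"
proof -
  have lin: "Vector_Spaces.linear scale scale (\<lambda>y. m (m a y) z)"
    using Vector_Spaces.linear_compose[OF linear_mult_right linear_mult_left]
    by (simp add: comp_def)
  have "m (m a x) z = 0" if "x \<in> lpow m a ` {1..n}" for x
  proof -
    from that obtain k where "1 \<le> k" "x = lpow m a k" by auto
    then have "m a x = lpow m a (Suc (Suc (k - 1)))" by (simp add: lpow_Suc)
    then show ?thesis by (simp add: power_mult_zero)
  qed
  then show ?thesis
    using vs.linear_eq_0_on_span[OF lin] powers_span by blast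
qed

text \<open>Every element has the form \<open>c a + a w\<close>: the left powers \<open>a\<^sup>k\<close>, \<open>k \<ge> 2\<close>, lie in the
  image of \<open>L\<^sub>a\<close>, and \<open>{c a + a w}\<close> is a subspace.\<close>
lemma decomposition: obtains c w where "x = scale c a + m a w"
proof -
  let ?S = "{scale c a + m a w | c w. True}"
  have "subspace ?S"
  proof (rule subspaceI)
    show "0 \<in> ?S" by (auto intro!: exI[of _ 0])
    show "x + y \<in> ?S" if "x \<in> ?S" "y \<in> ?S" for x y
    proof -
      from that obtain c1 w1 c2 w2 where "x = scale c1 a + m a w1" "y = scale c2 a + m a w2"
        by auto
      then have "x + y = scale (c1 + c2) a + m a (w1 + w2)"
        by (simp add: vs.linear_add[OF linear_mult_right] scale_left_distrib algebra_simps)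
      then show ?thesis by blast
    qed
    show "scale c x \<in> ?S" if "x \<in> ?S" for c x
    proof -
      from that obtain c1 w1 where "x = scale c1 a + m a w1" by auto
      then have "scale c x = scale (c * c1) a + m a (scale c w1)"
        by (simp add: vs.linear_scale[OF linear_mult_right] scale_right_distrib)
      then show ?thesis by blast
    qed
  qed
  moreover have "lpow m a k \<in> ?S" if "1 \<le> k" for k
  proof (cases "k = 1")
    case True
    then have "lpow m a k = scale 1 a + m a 0" by (simp add: lpow_def)
    then show ?thesis by blast
  next
    case False
    with that have "lpow m a k = scale 0 a + m a (lpow m a (k - 1))"
      using lpow_Suc[of "k - 1" m a] by simp
    then show ?thesis by blast
  qed
  ultimately have "span (lpow m a ` {1..n}) \<subseteq> ?S"
    by (intro span_minimal) auto
  then show ?thesis using that powers_span by auto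
qed

lemma mult_decomposed: "m (scale c a + m a w) y = scale c (m a y)"
  by (simp add: m_add_left m_scale_left image_mult_zero)

lemma product_in_image: "m x y \<in> range (m a)"
proof -
  obtain c w where "x = scale c a + m a w" by (rule decomposition)
  then have "m x y = m a (scale c y)"
    by (simp add: mult_decomposed vs.linear_scale[OF linear_mult_right])
  then show ?thesis by simp
qed

lemma image_ideal: "alg_ideal scale m (range (m a))"
  unfolding alg_ideal_def
  using vs.linear_subspace_image[OF linear_mult_right subspace_UNIV] product_in_image
  by blast

text \<open>An ideal containing an element \<open>c a + a w\<close> with \<open>c \<noteq> 0\<close> contains \<open>L\<^sub>a(A)\<close>
  (multiply from the left) and then \<open>a\<close> itself, so it is everything.\<close>
lemma proper_ideal_in_image:
  assumes "alg_ideal scale m I" and "I \<noteq> UNIV"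
  shows "I \<subseteq> range (m a)"
proof (rule ccontr)
  assume "\<not> I \<subseteq> range (m a)"
  then obtain v where v: "v \<in> I" "v \<notin> range (m a)" by blast
  obtain c w where cw: "v = scale c a + m a w" by (rule decomposition)
  have sub: "subspace I" and mult_I: "\<And>x y. y \<in> I \<Longrightarrow> m y x \<in> I"
    using assms(1) unfolding alg_ideal_def by blast+
  have c: "c \<noteq> 0" using v cw by auto
  have image_I: "m a y \<in> I" for y
  proof -
    have "scale c (m a y) \<in> I" using mult_I[OF v(1)] cw mult_decomposed by simp
    then have "scale (inverse c) (scale c (m a y)) \<in> I" by (rule subspace_scale[OF sub])
    then show ?thesis using c by simp
  qed
  have "scale c a \<in> I" using subspace_diff[OF sub v(1) image_I[of w]] cw by simp
  then have "scale (inverse c) (scale c a) \<in> I" by (rule subspace_scale[OF sub])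
  then have a_I: "a \<in> I" using c by simp
  have "x \<in> I" for x
  proof -
    obtain c' w' where "x = scale c' a + m a w'" by (rule decomposition)
    then show ?thesis using subspace_add[OF sub subspace_scale[OF sub a_I] image_I] by simp
  qed
  then show False using assms(2) by blast
qed

lemma unique_maximal_ideal:
  assumes "a \<notin> range (m a)"
  shows "maximal_ideal scale m I \<longleftrightarrow> I = range (m a)"
proof
  assume max: "maximal_ideal scale m I"
  then have "alg_ideal scale m I" "I \<noteq> UNIV" unfolding maximal_ideal_def by auto
  then have "I \<subseteq> range (m a)" by (rule proper_ideal_in_image)
  moreover have "range (m a) \<noteq> UNIV" using assms by blast
  ultimately show "I = range (m a)"
    using max image_ideal unfolding maximal_ideal_def by blast
next
  assume "I = range (m a)"
  moreover have "range (m a) \<noteq> UNIV" using assms by blast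
  ultimately show "maximal_ideal scale m I"
    using image_ideal proper_ideal_in_image unfolding maximal_ideal_def by blast
qed

end

locale cyclic_leibniz_basis = cyclic_leibniz +
  fixes \<alpha>
  assumes n_pos: "1 \<le> n"
    and powers_inj: "inj_on (lpow m a) {1..n}"
    and powers_independent: "\<not> dependent (lpow m a ` {1..n})"
    and power_relation: "m a (lpow m a n) = (\<Sum>k=2..n. scale (\<alpha> k) (lpow m a k))"
begin

lemma char_poly_kills_generator: "poly_op scale (char_poly_cyc n \<alpha>) (m a) a = 0"
proof -
  have "(m a ^^ (k - 1)) a = lpow m a k" if "k \<in> {2..n}" for k
    using that lpow_Suc_funpow[of m a "k - 1"] by simp
  then have "(\<Sum>k=2..n. scale (\<alpha> k) ((m a ^^ (k - 1)) a)) = (\<Sum>k=2..n. scale (\<alpha> k) (lpow m a k))"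
    by simp
  moreover have "(m a ^^ n) a = m a (lpow m a n)"
    using n_pos lpow_Suc_funpow[of m a n] lpow_Suc[of n m a] by simp
  ultimately show ?thesis
    by (simp add: char_poly_cyc_def poly_op_diff poly_op_sum poly_op_monom power_relation)
qed

text \<open>Since \<open>p(L\<^sub>a)\<close> commutes with \<open>L\<^sub>a\<close> and the left powers \<open>a\<^sup>k = L\<^sub>a\<^sup>k\<^sup>-\<^sup>1 a\<close> span \<open>A\<close>,
  \<open>p(L\<^sub>a) = 0\<close>.\<close>
lemma char_poly_annihilates: "poly_op scale (char_poly_cyc n \<alpha>) (m a) x = 0"
proof -
  have "poly_op scale (char_poly_cyc n \<alpha>) (m a) y = 0" if "y \<in> lpow m a ` {1..n}" for y
  proof -
    from that obtain k where "1 \<le> k" "y = lpow m a k" by auto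
    then have "y = (m a ^^ (k - 1)) a" using lpow_Suc_funpow[of m a "k - 1"] by simp
    then show ?thesis
      by (simp add: poly_op_funpow_commute[OF linear_mult_right] char_poly_kills_generator
          vs.linear_0[OF funpow_linear[OF linear_mult_right]])
  qed
  then show ?thesis
    using vs.linear_eq_0_on_span[OF poly_op_linear[OF linear_mult_right]] powers_span by blast
qed

text \<open>With \<open>t = p div x\<close> we have \<open>t(L\<^sub>a) \<circ> L\<^sub>a = p(L\<^sub>a) = 0\<close>.\<close>
lemma cofactor_kills_image:
  "poly_op scale (char_poly_cyc n \<alpha> div [:0, 1:]) (m a) (m a y) = 0"
proof -
  have "char_poly_cyc n \<alpha> div [:0, 1:] * [:0, 1:] = char_poly_cyc n \<alpha>"
    unfolding char_poly_cyc_div[OF n_pos] by (rule char_poly_cyc_factor[OF n_pos, symmetric])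
  then show ?thesis
    using poly_op_mult_X[of "char_poly_cyc n \<alpha> div [:0, 1:]" "m a" y] char_poly_annihilates
    by simp
qed

text \<open>\<open>t(L\<^sub>a) a = a\<^sup>n - \<Sum> \<alpha>\<^sub>k a\<^sup>k\<^sup>-\<^sup>1\<close> is a nontrivial combination of distinct basis vectors.\<close>
lemma cofactor_generator: "poly_op scale (char_poly_cyc n \<alpha> div [:0, 1:]) (m a) a \<noteq> 0"
proof
  let ?B = "lpow m a ` {1..n}"
  assume "poly_op scale (char_poly_cyc n \<alpha> div [:0, 1:]) (m a) a = 0"
  then have "(m a ^^ (n - 1)) a = (\<Sum>k=2..n. scale (\<alpha> k) ((m a ^^ (k - 2)) a))"
    by (simp add: char_poly_cyc_div[OF n_pos] poly_op_diff poly_op_sum poly_op_monom)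
  moreover have "(m a ^^ (n - 1)) a = lpow m a n"
    using n_pos lpow_Suc_funpow[of m a "n - 1"] by simp
  moreover have "(m a ^^ (k - 2)) a = lpow m a (k - 1)" if "k \<in> {2..n}" for k
    using that lpow_Suc_funpow[of m a "k - 2"] by (simp add: Suc_diff_Suc numeral_2_eq_2)
  ultimately have eq: "lpow m a n = (\<Sum>k=2..n. scale (\<alpha> k) (lpow m a (k - 1)))"
    by simp
  have "lpow m a (k - 1) \<in> ?B - {lpow m a n}" if "k \<in> {2..n}" for k
  proof -
    have "k - 1 \<in> {1..n}" "k - 1 \<noteq> n" "n \<in> {1..n}" using that n_pos by auto
    then show ?thesis using powers_inj by (auto dest: inj_onD)
  qed
  then have "lpow m a n \<in> span (?B - {lpow m a n})"
    unfolding eq by (intro span_sum span_scale span_base) auto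
  moreover have "lpow m a n \<in> ?B" using n_pos by auto
  ultimately show False
    using powers_independent unfolding dependent_def by blast
qed

text \<open>The kernel of \<open>t(L\<^sub>a)\<close> is exactly \<open>L\<^sub>a(A)\<close>: write \<open>b = c a + a w\<close>; then
  \<open>t(L\<^sub>a) b = c t(L\<^sub>a) a\<close>, which vanishes only for \<open>c = 0\<close>.\<close>
lemma cofactor_kernel:
  "poly_op scale (char_poly_cyc n \<alpha> div [:0, 1:]) (m a) b = 0 \<longleftrightarrow> b \<in> range (m a)"
proof
  let ?T = "poly_op scale (char_poly_cyc n \<alpha> div [:0, 1:]) (m a)"
  have lin: "Vector_Spaces.linear scale scale ?T"
    by (rule poly_op_linear[OF linear_mult_right])
  assume "?T b = 0"
  obtain c w where cw: "b = scale c a + m a w" by (rule decomposition)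
  then have "?T b = scale c (?T a)"
    by (simp add: vs.linear_add[OF lin] vs.linear_scale[OF lin] cofactor_kills_image)
  with \<open>?T b = 0\<close> cofactor_generator have "c = 0" by simp
  then show "b \<in> range (m a)" using cw by simp
next
  assume "b \<in> range (m a)"
  then show "poly_op scale (char_poly_cyc n \<alpha> div [:0, 1:]) (m a) b = 0"
    using cofactor_kills_image by auto
qed

end

text \<open>It equals
  \<open>L\<^sub>a(A)\<close>, which does not contain \<open>a\<close>.\<close>
theorem mainTheorem14:
  fixes scale :: "'a::field \<Rightarrow> 'v::ab_group_add \<Rightarrow> 'v"
    and m :: "'v \<Rightarrow> 'v \<Rightarrow> 'v"
    and a :: 'v and n :: nat and \<alpha> :: "nat \<Rightarrow> 'a"
  assumes "1 \<le> n"
    and "leibniz_algebra scale m"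
    and "generated_by scale m a"
    and "inj_on (lpow m a) {1..n}"
    and "\<not> module.dependent scale (lpow m a ` {1..n})"
    and "module.span scale (lpow m a ` {1..n}) = UNIV"
    and "m a (lpow m a n) = (\<Sum>k=2..n. scale (\<alpha> k) (lpow m a k))"
  shows "\<forall>I. maximal_ideal scale m I \<longleftrightarrow>
           I = {b. poly_op scale (char_poly_cyc n \<alpha> div [:0, 1:]) (m a) b = 0}"
proof -
  interpret cyclic_leibniz_basis scale m a n \<alpha>
    by unfold_locales (fact assms)+
  have kernel: "{b. poly_op scale (char_poly_cyc n \<alpha> div [:0, 1:]) (m a) b = 0} = range (m a)"
    using cofactor_kernel by blast
  have "a \<notin> range (m a)"
    using cofactor_kernel cofactor_generator by blast
  then show ?thesis
    unfolding kernel using unique_maximal_ideal by blast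
qed

end
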